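(* There exists a polyhedral complex $\mathcal C$ of $\mathbb R^{n(n+1)/2}$ with support $\widetilde{K}$, such that the image by $\Phi$ of the set of matrices $A \in {\operatorname{\mathsf{TPD}}}_n(\mathbb{S}_{\max}^{\vee})$ such that all the eigenvalues of $A$ are simple and all the vectors $v^{(k)}$ are in $(\mathbb{S}_{\max}^{\vee}\setminus\{\mathbf{0}\})^n$ contains all the interiors of cells of maximal dimension of $\mathcal C$.
   Context: Here $\Gamma=\mathbb R$ and $\mathbb{S}_{\max}=\mathbb{S}_{\max}(\mathbb R)$ is the symmetrized tropical semiring, with zero $\mathbf{0}$, unit $\mathbf{1}$, minus $\ominus$, modulus $|\cdot|$ with values in $\mathbb{R}_{\max}=\mathbb R\cup\{-\infty\}$; $\mathbb{S}_{\max}^\vee$ is the set of signed elements. $A\in{\operatorname{\mathsf{TPD}}}_n(\mathbb{S}_{\max}^\vee)$: $A=(a_{ij})$ symmetric with signed entries, $\mathbf{0}<a_{ii}$ and $a_{ij}^2<a_{ii}a_{jj}$ for $i\ne j$. $\Psi(A)=(a_{ij})_{1\le i\le j\le n}$, $\mu$ applies the modulus entrywise, $\Phi=\mu\circ\Psi$, $K=\Phi({\operatorname{\mathsf{TPD}}}_n(\mathbb{S}_{\max}^\vee))$, and $\widetilde K$ is the closure in $\mathbb R^{n(n+1)/2}$ of $K\cap\mathbb R^{n(n+1)/2}=\{x: 2x_{ij}<x_{ii}+x_{jj}\ \forall i<j\}$, a convex polyhedron of dimension $n(n+1)/2$. The $\mathbb{S}_{\max}$-eigenvalues of $A$ are its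 diagonal entries $\gamma_k=a_{kk}$; after reindexing so that $\gamma_1\succeq\cdots\succeq\gamma_n$, $v^{(k)}=(\gamma_k I\ominus A)^{\mathrm{adj}}_{:,k}$. A polyhedral complex is a collection of polyhedra (cells) any two of which intersect in a common face or not at all; its support is the union of its cells. *)

theory Defs
  imports "HOL-Analysis.Analysis" "HOL-Library.Extended_Real"
begin

text \<open>Elements: the zero, signed elements (+r), (-r) and balanced elements r-bullet, r real.\<close>
datatype smax = SZero | SPos real | SNeg real | SBal real

fun smod :: "smax \<Rightarrow> ereal" where
  "smod SZero = -\<infinity>"
| "smod (SPos r) = ereal r"
| "smod (SNeg r) = ereal r"
| "smod (SBal r) = ereal r"

fun sabs :: "smax \<Rightarrow> real" where
  "sabs SZero = 0"
| "sabs (SPos r) = r"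
| "sabs (SNeg r) = r"
| "sabs (SBal r) = r"

definition sone :: smax where "sone = SPos 0"

fun sminus :: "smax \<Rightarrow> smax" where
  "sminus (SPos r) = SNeg r"
| "sminus (SNeg r) = SPos r"
| "sminus x = x"

definition splus :: "smax \<Rightarrow> smax \<Rightarrow> smax" where
  "splus a b =
     (if a = SZero then b else if b = SZero then a
      else if sabs a > sabs b then a else if sabs b > sabs a then b
      else if a = b then a else SBal (sabs a))"

fun stimes :: "smax \<Rightarrow> smax \<Rightarrow> smax" where
  "stimes SZero _ = SZero"
| "stimes _ SZero = SZero"
| "stimes (SBal r) y = SBal (r + sabs y)"
| "stimes x (SBal s) = SBal (sabs x + s)"
| "stimes (SPos r) (SPos s) = SPos (r + s)"
| "stimes (SNeg r) (SNeg s) = SPos (r + s)"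
| "stimes (SPos r) (SNeg s) = SNeg (r + s)"
| "stimes (SNeg r) (SPos s) = SNeg (r + s)"

definition is_pos :: "smax \<Rightarrow> bool" where
  "is_pos x \<longleftrightarrow> (\<exists>r. x = SPos r)"
definition is_neg :: "smax \<Rightarrow> bool" where
  "is_neg x \<longleftrightarrow> (\<exists>r. x = SNeg r)"
definition is_bal :: "smax \<Rightarrow> bool" where
  "is_bal x \<longleftrightarrow> (\<exists>r. x = SBal r)"

definition signed :: "smax \<Rightarrow> bool" where
  "signed x \<longleftrightarrow> \<not> is_bal x"

text \<open>order of S_max: a \<preceq> b iff b \<ominus> a is positive, balanced or zero; a \<prec> b iff b \<ominus> a is
  nonzero positive. On signed elements this is the usual total order.\<close>
definition sle :: "smax \<Rightarrow> smax \<Rightarrow> bool" where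
  "sle a b \<longleftrightarrow> (let d = splus b (sminus a) in d = SZero \<or> is_pos d \<or> is_bal d)"
definition slt :: "smax \<Rightarrow> smax \<Rightarrow> bool" where
  "slt a b \<longleftrightarrow> is_pos (splus b (sminus a))"

text \<open>Finite tropical sums (iterated \<oplus>), written in closed form: the result has the
  maximal modulus of the nonzero terms, and is positive/negative if all terms of
  maximal modulus are positive/negative, balanced otherwise.\<close>
definition ssum :: "('a \<Rightarrow> smax) \<Rightarrow> 'a set \<Rightarrow> smax" where
  "ssum f A =
    (let T = {x\<in>A. f x \<noteq> SZero} in
     if T = {} then SZero else
     (let M = Max (sabs ` f ` T); top = {x\<in>T. sabs (f x) = M} in
      if (\<forall>x\<in>top. is_pos (f x)) then SPos M
      else if (\<forall>x\<in>top. is_neg (f x)) then SNeg M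
      else SBal M))"

text \<open>Finite tropical products (iterated \<otimes>) over a finite set, closed form.\<close>
definition sprod :: "('a \<Rightarrow> smax) \<Rightarrow> 'a set \<Rightarrow> smax" where
  "sprod f A =
    (if (\<exists>x\<in>A. f x = SZero) then SZero
     else (let m = (\<Sum>x\<in>A. sabs (f x)) in
       if (\<exists>x\<in>A. is_bal (f x)) then SBal m
       else if even (card {x\<in>A. is_neg (f x)}) then SPos m else SNeg m))"

definition ssign :: "('n \<Rightarrow> 'n) \<Rightarrow> smax" where
  "ssign p = (if evenperm p then sone else sminus sone)"

text \<open>adjugate: adj(M)_{ij} = \<oplus>_{\<sigma>, \<sigma>(j)=i} sgn(\<sigma>) \<otimes>_{k\<noteq>j} M_{k \<sigma>(k)}
  (= (\<ominus>1)^{i+j} det of M with row j and column i removed)\<close>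
definition sadj :: "('n::finite \<Rightarrow> 'n \<Rightarrow> smax) \<Rightarrow> 'n \<Rightarrow> 'n \<Rightarrow> smax" where
  "sadj M i j = ssum (\<lambda>\<sigma>. stimes (ssign \<sigma>) (sprod (\<lambda>k. M k (\<sigma> k)) (UNIV - {j})))
                      {\<sigma>. \<sigma> permutes (UNIV::'n set) \<and> \<sigma> j = i}"

definition sshift :: "smax \<Rightarrow> ('n \<Rightarrow> 'n \<Rightarrow> smax) \<Rightarrow> 'n \<Rightarrow> 'n \<Rightarrow> smax" where
  "sshift \<gamma> A = (\<lambda>i j. splus (stimes \<gamma> (if i = j then sone else SZero)) (sminus (A i j)))"

definition TPD :: "('n \<Rightarrow> 'n \<Rightarrow> smax) set" where
  "TPD = {A. (\<forall>i j. A i j = A j i) \<and> (\<forall>i j. signed (A i j)) \<and>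
             (\<forall>i. slt SZero (A i i)) \<and>
             (\<forall>i j. i \<noteq> j \<longrightarrow> slt (stimes (A i j) (A i j)) (stimes (A i i) (A j j)))}"

section \<open>Index set {(i,j). i \<le> j}, so that R^{n(n+1)/2} = real^('n utri)\<close>

typedef (overloaded) ('n::linorder) utri = "{(i::'n, j). i \<le> j}"
  morphisms utri_rep Abs_utri by auto

instance utri :: ("{finite,linorder}") finite
proof
  have "(UNIV :: 'a utri set) = Abs_utri ` {(i::'a, j). i \<le> j}"
    using type_definition.univ[OF type_definition_utri] by simp
  moreover have "finite {(i::'a, j). i \<le> j}"
    by (rule finite_subset[of _ UNIV]) auto
  ultimately show "finite (UNIV :: 'a utri set)" by (metis finite_imageI)
qed

definition Phi :: "('n::linorder \<Rightarrow> 'n \<Rightarrow> smax) \<Rightarrow> 'n utri \<Rightarrow> ereal" where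
  "Phi A p = smod (A (fst (utri_rep p)) (snd (utri_rep p)))"

definition to_rmax :: "real ^ ('n::{finite,linorder} utri) \<Rightarrow> 'n utri \<Rightarrow> ereal" where
  "to_rmax x = (\<lambda>p. ereal (x $ p))"

definition Ktilde :: "(real ^ ('n::{finite,linorder} utri)) set" where
  "Ktilde = closure {x. to_rmax x \<in> Phi ` (TPD :: ('n \<Rightarrow> 'n \<Rightarrow> smax) set)}"

definition polyhedral_complex :: "('a::euclidean_space) set set \<Rightarrow> bool" where
  "polyhedral_complex C \<longleftrightarrow> finite C \<and> (\<forall>c\<in>C. polyhedron c) \<and>
     (\<forall>c\<in>C. \<forall>d\<in>C. c \<inter> d = {} \<or> (c \<inter> d face_of c \<and> c \<inter> d face_of d))"

text \<open>A reindexing (permutation similarity) sorting the diagonal (= eigenvalues)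
  nonincreasingly; then v^(k) = column k of adj(\<gamma>_k I \<ominus> A).\<close>
definition good_eigvecs :: "('n::{finite,linorder} \<Rightarrow> 'n \<Rightarrow> smax) \<Rightarrow> bool" where
  "good_eigvecs A \<longleftrightarrow>
     (\<exists>\<sigma>. \<sigma> permutes (UNIV::'n set) \<and>
        (let B = (\<lambda>i j. A (\<sigma> i) (\<sigma> j)) in
          (\<forall>i j. i \<le> j \<longrightarrow> sle (B j j) (B i i)) \<and>
          (\<forall>k i. signed (sadj (sshift (B k k) B) i k) \<and> sadj (sshift (B k k) B) i k \<noteq> SZero)))"

definition simple_eigenvalues :: "('n \<Rightarrow> 'n \<Rightarrow> smax) \<Rightarrow> bool" where
  "simple_eigenvalues A \<longleftrightarrow> inj (\<lambda>i. A i i)"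

end

theory Submission
  imports Defs "HOL-Combinatorics.Orbits"
begin

text \<open>
  Take for the complex the cells cut out of K~ by finitely many hyperplanes: the facets
  2 x_ij = x_ii + x_jj of K~, the hyperplanes x_ii = x_jj, and the hyperplanes on which two
  permutations have the same weight in the expansion of an entry of an adjugate
  adj(gamma_k I - A). A point x in the interior of a cell lies on none of them, so the matrix A
  with diagonal entries +x_ii and off-diagonal entries -x_ij lies in TPD and has a diagonal
  without repetitions, i.e. simple eigenvalues. All terms of the expansion of v^(k)_i are
  signed and nonzero, so v^(k)_i is signed and nonzero as soon as the term of maximal modulus is
  unique. A permutation of maximal weight fixes every point off its cycle through k, since by
  2 x_ij < x_ii + x_jj any other cycle weighs less than the identity; a permutation of this
  shape is determined by its set of edges, and off the hyperplanes equal weights force equal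
  sets of edges.
\<close>

section \<open>Permutations determined by their edges\<close>

definition perm_edge :: "('n \<Rightarrow> 'n) \<Rightarrow> 'n \<Rightarrow> 'n \<Rightarrow> 'n \<Rightarrow> bool" where
  "perm_edge s k u v \<longleftrightarrow> (\<exists>l. l \<noteq> k \<and> s l \<noteq> l \<and> {l, s l} = {u, v})"

lemma moved_iff_perm_edge:
  assumes "inj s" "l \<noteq> k"
  shows "s l \<noteq> l \<longleftrightarrow> (\<exists>v. v \<noteq> l \<and> perm_edge s k l v)"
proof
  assume "s l \<noteq> l"
  then show "\<exists>v. v \<noteq> l \<and> perm_edge s k l v"
    unfolding perm_edge_def using assms(2) by blast
next
  assume "\<exists>v. v \<noteq> l \<and> perm_edge s k l v"
  then obtain v l' where "v \<noteq> l" "s l' \<noteq> l'" "{l', s l'} = {l, v}"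
    by (auto simp: perm_edge_def)
  then show "s l \<noteq> l"
    using assms(1) by (metis doubleton_eq_iff injD)
qed

lemma fixed_iff_of_perm_edges:
  assumes "inj s" "inj t" "l \<noteq> k"
    and "\<And>u v. u \<noteq> v \<Longrightarrow> perm_edge s k u v \<longleftrightarrow> perm_edge t k u v"
  shows "s l = l \<longleftrightarrow> t l = l"
  using moved_iff_perm_edge[OF assms(1,3)] moved_iff_perm_edge[OF assms(2,3)] assms(4)
  by metis

lemma funpow_cancel:
  assumes "inj t" "(t ^^ (b + c)) x = (t ^^ b) x"
  shows "(t ^^ c) x = x"
proof -
  have "(t ^^ b) ((t ^^ c) x) = (t ^^ b) x"
    using assms(2) by (metis comp_apply funpow_add)
  then show ?thesis
    using inj_fn[OF assms(1), of b] by (auto dest: injD)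
qed

lemma funpow_two_cycle:
  assumes "inj t" "t k = i" "(t ^^ Suc (Suc m)) i = (t ^^ m) i"
  shows "t i = k" and "(t ^^ n) i \<in> {i, k}"
proof -
  have "(t ^^ 2) i = i"
    using funpow_cancel[OF assms(1), of m 2 i] assms(3) by simp
  then show "t i = k"
    using assms(1,2) by (auto simp: numeral_2_eq_2 dest: injD)
  then show "(t ^^ n) i \<in> {i, k}"
    using assms(2) by (induction n) auto
qed

text \<open>
  If t stepped back from the m-th to the (m-1)-th point of the path i, s i, s (s i), ...,
  then t (t i) = i, so t i = k and t would never leave {i, k}.
\<close>

lemma perm_path_no_backtrack:
  assumes s: "inj s" and t: "inj t" and sk: "s k = i" and tk: "t k = i"
    and agree: "\<And>j. j \<le> m \<Longrightarrow> (t ^^ j) i = (s ^^ j) i"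
    and uk: "(s ^^ m) i \<noteq> k" and step_back: "s (t ((s ^^ m) i)) = (s ^^ m) i" "t ((s ^^ m) i) \<noteq> k"
  shows False
proof -
  define u where "u = (s ^^ m) i"
  obtain m' where m': "m = Suc m'"
    using step_back sk s by (cases m) (auto dest: injD)
  then have "t u = (s ^^ m') i"
    using step_back(1) s by (auto simp: u_def dest: injD)
  then have "(t ^^ Suc (Suc m')) i = (t ^^ m') i"
    using agree[of m] agree[of m'] m' by (simp add: u_def)
  then have "t i = k" "(t ^^ m) i \<in> {i, k}"
    using funpow_two_cycle[OF t tk] by blast+
  moreover have "(t ^^ m) i = u"
    using agree[of m] by (simp add: u_def)
  ultimately show False
    using uk step_back(2) by (auto simp: u_def)
qed

lemma perm_step_eq_of_perm_edges:
  assumes s: "inj s" and t: "inj t" and sk: "s k = i" and tk: "t k = i"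
    and edges: "\<And>u v. u \<noteq> v \<Longrightarrow> perm_edge s k u v \<longleftrightarrow> perm_edge t k u v"
    and agree: "\<And>j. j \<le> m \<Longrightarrow> (t ^^ j) i = (s ^^ j) i"
  shows "t ((s ^^ m) i) = s ((s ^^ m) i)"
proof -
  define u where "u = (s ^^ m) i"
  have fixed_iff: "s l = l \<longleftrightarrow> t l = l" if "l \<noteq> k" for l
    by (rule fixed_iff_of_perm_edges[OF s t that edges])
  consider "u = k" | "u \<noteq> k" "s u = u" | "u \<noteq> k" "s u \<noteq> u"
    by blast
  then have "t u = s u"
  proof cases
    case 1
    then show ?thesis using sk tk by simp
  next
    case 2
    then show ?thesis using fixed_iff by metis
  next
    case 3
    then have "t u \<noteq> u" using fixed_iff by blast
    then have "perm_edge t k u (t u)"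
      using 3(1) by (auto simp: perm_edge_def)
    then have "perm_edge s k u (t u)"
      using edges \<open>t u \<noteq> u\<close> by metis
    then obtain l where l: "l \<noteq> k" "s l \<noteq> l" "{l, s l} = {u, t u}"
      by (auto simp: perm_edge_def)
    have "l = u"
    proof (rule ccontr)
      assume "l \<noteq> u"
      then have "l = t u" "s l = u"
        using l(3) by (auto simp: doubleton_eq_iff)
      then show False
        using perm_path_no_backtrack[OF s t sk tk agree] 3(1) l(1) by (simp add: u_def)
    qed
    then show ?thesis
      using l(3) by (auto simp: doubleton_eq_iff)
  qed
  then show ?thesis by (simp add: u_def)
qed

lemma perm_eq_of_perm_edges:
  assumes s: "inj s" and t: "inj t" and sk: "s k = i" and tk: "t k = i"
    and outside: "\<And>l. l \<notin> orbit s i \<Longrightarrow> s l = l" and k: "k \<in> orbit s i"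
    and edges: "\<And>u v. u \<noteq> v \<Longrightarrow> perm_edge s k u v \<longleftrightarrow> perm_edge t k u v"
  shows "s = t"
proof (rule ext)
  have agree: "(t ^^ m) i = (s ^^ m) i" for m
  proof (induction m rule: less_induct)
    case (less m)
    show ?case
    proof (cases m)
      case (Suc m')
      then have "(t ^^ j) i = (s ^^ j) i" if "j \<le> m'" for j
        using less that by simp
      then have "t ((s ^^ m') i) = s ((s ^^ m') i)"
        using perm_step_eq_of_perm_edges[OF s t sk tk edges] by blast
      then show ?thesis
        using less[of m'] Suc by simp
    qed simp
  qed
  have orbit_eq: "orbit s i = {(s ^^ n) i | n. True}"
    using k sk by (intro orbit_altdef_self_in) (metis orbit.step)
  fix l
  show "s l = t l"
  proof (cases "l \<in> orbit s i")
    case True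
    then obtain n where "l = (s ^^ n) i"
      using orbit_eq by auto
    then show ?thesis
      using agree[of n] agree[of "Suc n"] by simp
  next
    case False
    then show ?thesis
      using outside fixed_iff_of_perm_edges[OF s t _ edges] k by metis
  qed
qed

section \<open>The term of maximal modulus in an adjugate entry\<close>

text \<open>
  perm_weight y k s is the modulus of the term of s in the expansion of the entry (s k, k) of
  adj(gamma_k I - tpd_matrix y) with gamma_k = y k k: row l of gamma_k I - tpd_matrix y has
  moduli max (y k k) (y l l) on the diagonal and y l j off it.
\<close>

definition shift_weight :: "('n \<Rightarrow> 'n \<Rightarrow> real) \<Rightarrow> 'n \<Rightarrow> 'n \<Rightarrow> 'n \<Rightarrow> real" where
  "shift_weight y k l j = (if l = j then max (y k k) (y l l) else y l j)"

definition perm_weight :: "('n \<Rightarrow> 'n \<Rightarrow> real) \<Rightarrow> 'n \<Rightarrow> ('n \<Rightarrow> 'n) \<Rightarrow> real" where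
  "perm_weight y k s = (\<Sum>l\<in>UNIV-{k}. shift_weight y k l (s l))"

lemma sum_perm_less_sum_diag:
  fixes w :: "'a \<Rightarrow> 'a \<Rightarrow> real"
  assumes "finite C" "inj_on s C" "s ` C = C"
    and "\<And>l. l \<in> C \<Longrightarrow> 2 * w l (s l) \<le> w l l + w (s l) (s l)"
    and "l0 \<in> C" "2 * w l0 (s l0) < w l0 l0 + w (s l0) (s l0)"
  shows "(\<Sum>l\<in>C. w l (s l)) < (\<Sum>l\<in>C. w l l)"
proof -
  have "2 * (\<Sum>l\<in>C. w l (s l)) < (\<Sum>l\<in>C. w l l + w (s l) (s l))"
    unfolding sum_distrib_left by (rule sum_strict_mono_ex1) (use assms in auto)
  also have "\<dots> = (\<Sum>l\<in>C. w l l) + (\<Sum>l\<in>s ` C. w l l)"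
    by (simp add: sum.distrib sum.reindex[OF assms(2)])
  also have "\<dots> = 2 * (\<Sum>l\<in>C. w l l)"
    using assms(3) by simp
  finally show ?thesis by simp
qed

lemma permutes_in_orbit_of_image:
  fixes s :: "'n::finite \<Rightarrow> 'n"
  assumes "s permutes UNIV" "s k = i"
  shows "k \<in> orbit s i"
proof -
  have "k \<in> orbit s k"
    using assms(1) by (intro permutation_self_in_orbit) (auto simp: permutation_permutes)
  then show ?thesis
    using orbit_swap[of k s i] orbit.base[of s k] assms(2) by simp
qed

lemma max_weight_perm_fixes_outside_orbit:
  fixes s :: "'n::finite \<Rightarrow> 'n" and y :: "'n \<Rightarrow> 'n \<Rightarrow> real"
  assumes s: "s permutes UNIV" and sk: "s k = i"
    and tpd: "\<And>a b. a \<noteq> b \<Longrightarrow> 2 * y a b < y a a + y b b"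
    and max: "\<And>r. r permutes UNIV \<Longrightarrow> r k = i \<Longrightarrow> perm_weight y k r \<le> perm_weight y k s"
    and l0: "l0 \<notin> orbit s i"
  shows "s l0 = l0"
proof (rule ccontr)
  assume moved: "s l0 \<noteq> l0"
  define Orb where "Orb = orbit s i"
  have inj: "inj s"
    using s permutes_inj by blast
  have kO: "k \<in> Orb"
    unfolding Orb_def using s sk by (rule permutes_in_orbit_of_image)
  have sO: "s ` Orb = Orb"
    unfolding Orb_def
    by (rule endo_inj_surj) (auto intro: orbit.step inj_on_subset[OF inj])
  have sC: "s ` (- Orb) = - Orb"
    using sO bij_image_Compl_eq[of s Orb] s by (simp add: permutes_bij)
  txt \<open>Making s the identity off the orbit of i keeps r k = i but increases the weight.\<close>
  define r where "r = perm_restrict s Orb"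
  have "inj r"
    using sO inj unfolding r_def inj_def perm_restrict_def by (auto dest: injD)
  then have r: "r permutes UNIV"
    by (rule inj_imp_permutes) auto
  have rk: "r k = i"
    using kO sk by (simp add: r_def perm_restrict_simps)
  have split: "(\<Sum>l\<in>UNIV-{k}. f l) = (\<Sum>l\<in>Orb-{k}. f l) + (\<Sum>l\<in>-Orb. f l)"
    for f :: "'n \<Rightarrow> real"
    using kO by (subst sum.union_disjoint[symmetric]) (auto intro: sum.cong)
  have "(\<Sum>l\<in>-Orb. shift_weight y k l (s l)) < (\<Sum>l\<in>-Orb. shift_weight y k l l)"
  proof (rule sum_perm_less_sum_diag)
    show "inj_on s (- Orb)"
      using inj inj_on_subset by blast
    show "2 * shift_weight y k l (s l) \<le> shift_weight y k l l + shift_weight y k (s l) (s l)" for l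
      using tpd[of l "s l"] by (cases "s l = l") (auto simp: shift_weight_def)
    show "2 * shift_weight y k l0 (s l0) < shift_weight y k l0 l0 + shift_weight y k (s l0) (s l0)"
      using tpd[of l0 "s l0"] moved by (auto simp: shift_weight_def)
  qed (use sC l0 Orb_def in auto)
  then have "perm_weight y k s < perm_weight y k r"
    unfolding perm_weight_def split
    by (simp add: r_def perm_restrict_simps)
  then show False
    using max[OF r rk] by simp
qed

definition tpd_matrix :: "('n \<Rightarrow> 'n \<Rightarrow> real) \<Rightarrow> 'n \<Rightarrow> 'n \<Rightarrow> smax" where
  "tpd_matrix y = (\<lambda>i j. if i = j then SPos (y i i) else SNeg (y i j))"

lemma sshift_tpd_matrix:
  assumes "l \<noteq> k" "y l l \<noteq> y k k"
  defines "M \<equiv> sshift (tpd_matrix y k k) (tpd_matrix y)"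
  shows "M l j \<in> {SPos (shift_weight y k l j), SNeg (shift_weight y k l j)}"
  using assms unfolding M_def
  by (cases "l = j"; cases "y k k < y l l")
     (auto simp: sshift_def tpd_matrix_def sone_def splus_def shift_weight_def)

lemma adj_term_signed:
  fixes y :: "'n::finite \<Rightarrow> 'n \<Rightarrow> real"
  assumes "\<And>l. l \<noteq> k \<Longrightarrow> y l l \<noteq> y k k"
  defines "M \<equiv> sshift (tpd_matrix y k k) (tpd_matrix y)"
  shows "stimes (ssign s) (sprod (\<lambda>l. M l (s l)) (UNIV - {k}))
           \<in> {SPos (perm_weight y k s), SNeg (perm_weight y k s)}"
proof -
  have entry: "M l (s l) \<noteq> SZero \<and> \<not> is_bal (M l (s l)) \<and> sabs (M l (s l)) = shift_weight y k l (s l)"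
    if "l \<noteq> k" for l
    using sshift_tpd_matrix[of l k y "s l"] that assms(1)[OF that]
    unfolding M_def by (auto simp: is_bal_def)
  have "(\<Sum>l\<in>UNIV-{k}. sabs (M l (s l))) = perm_weight y k s"
    unfolding perm_weight_def by (rule sum.cong) (simp_all add: entry)
  then show ?thesis
    unfolding sprod_def using entry by (auto simp: Let_def ssign_def sone_def)
qed

lemma ssum_signed_if_unique_max:
  assumes "finite S" "S \<noteq> {}"
    and terms: "\<And>x. x \<in> S \<Longrightarrow> f x \<in> {SPos (w x), SNeg (w x)}"
    and unique: "\<And>x x'. x \<in> S \<Longrightarrow> x' \<in> S \<Longrightarrow> \<forall>z\<in>S. w z \<le> w x \<Longrightarrow> \<forall>z\<in>S. w z \<le> w x'
      \<Longrightarrow> x = x'"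
  shows "signed (ssum f S) \<and> ssum f S \<noteq> SZero"
proof -
  have nonzero: "{x\<in>S. f x \<noteq> SZero} = S"
    by (force dest: terms)
  have sabs: "sabs (f x) = w x" if "x \<in> S" for x
    using terms[OF that] by auto
  define M where "M = Max (sabs ` f ` S)"
  define top where "top = {x\<in>S. sabs (f x) = M}"
  have "x = x'" if "x \<in> top" "x' \<in> top" for x x'
  proof (rule unique)
    have "sabs (f z) \<le> M" if "z \<in> S" for z
      unfolding M_def using assms(1) that by (intro Max_ge) auto
    then show "\<forall>z\<in>S. w z \<le> w x" "\<forall>z\<in>S. w z \<le> w x'"
      using that sabs by (auto simp: top_def)
  qed (use that in \<open>auto simp: top_def\<close>)
  then have "(\<forall>x\<in>top. is_pos (f x)) \<or> (\<forall>x\<in>top. is_neg (f x))"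
  proof (cases "top = {}")
    case False
    then obtain x0 where x0: "x0 \<in> top"
      by blast
    with \<open>\<And>x x'. x \<in> top \<Longrightarrow> x' \<in> top \<Longrightarrow> x = x'\<close> have "top = {x0}"
      by blast
    then show ?thesis
      using terms[of x0] x0 by (auto simp: top_def is_pos_def is_neg_def)
  qed simp
  then show ?thesis
    unfolding ssum_def nonzero Let_def using assms(2)
    by (auto simp: M_def[symmetric] top_def[symmetric] signed_def is_bal_def)
qed

lemma max_weight_perm_unique:
  fixes y :: "'n::finite \<Rightarrow> 'n \<Rightarrow> real"
  assumes tpd: "\<And>a b. a \<noteq> b \<Longrightarrow> 2 * y a b < y a a + y b b"
    and generic: "\<And>s t u v. perm_weight y k s = perm_weight y k t \<Longrightarrow> u \<noteq> v
      \<Longrightarrow> perm_edge s k u v \<longleftrightarrow> perm_edge t k u v"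
    and s: "s permutes UNIV" "s k = i" and t: "t permutes UNIV" "t k = i"
    and s_max: "\<And>r. r permutes UNIV \<Longrightarrow> r k = i \<Longrightarrow> perm_weight y k r \<le> perm_weight y k s"
    and t_max: "\<And>r. r permutes UNIV \<Longrightarrow> r k = i \<Longrightarrow> perm_weight y k r \<le> perm_weight y k t"
  shows "s = t"
proof -
  have "perm_weight y k s = perm_weight y k t"
    using t_max[OF s] s_max[OF t] by (rule order.antisym)
  note edges = generic[OF this]
  have outside: "s l = l" if "l \<notin> orbit s i" for l
    using max_weight_perm_fixes_outside_orbit[of s k i y l] s tpd s_max that by blast
  show "s = t"
    using perm_eq_of_perm_edges[OF permutes_inj[OF s(1)] permutes_inj[OF t(1)] s(2) t(2) outside
        permutes_in_orbit_of_image[OF s] edges] .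
qed

lemma adj_column_signed_nonzero:
  fixes y :: "'n::finite \<Rightarrow> 'n \<Rightarrow> real"
  assumes tpd: "\<And>a b. a \<noteq> b \<Longrightarrow> 2 * y a b < y a a + y b b"
    and diag: "inj (\<lambda>a. y a a)"
    and generic: "\<And>s t u v. perm_weight y k s = perm_weight y k t \<Longrightarrow> u \<noteq> v
      \<Longrightarrow> perm_edge s k u v \<longleftrightarrow> perm_edge t k u v"
  defines "M \<equiv> sshift (tpd_matrix y k k) (tpd_matrix y)"
  shows "signed (sadj M i k) \<and> sadj M i k \<noteq> SZero"
proof -
  define S where "S = {s. s permutes (UNIV::'n set) \<and> s k = i}"
  have "sadj M i k = ssum (\<lambda>s. stimes (ssign s) (sprod (\<lambda>l. M l (s l)) (UNIV - {k}))) S"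
    unfolding sadj_def S_def ..
  also have "signed \<dots> \<and> \<dots> \<noteq> SZero"
  proof (rule ssum_signed_if_unique_max)
    show "finite S" by simp
    show "S \<noteq> {}"
      using permutes_swap_id[of k UNIV i]
      by (auto simp: S_def intro!: exI[of _ "Transposition.transpose k i"])
    show "stimes (ssign s) (sprod (\<lambda>l. M l (s l)) (UNIV - {k}))
        \<in> {SPos (perm_weight y k s), SNeg (perm_weight y k s)}" for s
      unfolding M_def using diag by (intro adj_term_signed) (auto dest: injD)
    show "s = t" if "s \<in> S" "t \<in> S" "\<forall>r\<in>S. perm_weight y k r \<le> perm_weight y k s"
      "\<forall>r\<in>S. perm_weight y k r \<le> perm_weight y k t" for s t
      using that by (intro max_weight_perm_unique[OF tpd generic]) (auto simp: S_def)
  qed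
  finally show ?thesis .
qed

lemma sle_SPos: "sle (SPos a) (SPos b) \<longleftrightarrow> a \<le> b"
  by (auto simp: sle_def splus_def is_pos_def is_bal_def Let_def)

lemma bij_betw_lessThan_CARD:
  fixes f :: "'n::finite \<Rightarrow> nat"
  assumes "inj f" "\<And>i. f i < CARD('n)"
  shows "bij_betw f UNIV {..<CARD('n)}"
proof -
  have "f ` UNIV = {..<CARD('n)}"
    using assms by (intro card_subset_eq) (auto simp: card_image)
  then show ?thesis
    using assms(1) by (simp add: bij_betw_def)
qed

lemma exists_antitone_perm:
  fixes d :: "'n::{finite,linorder} \<Rightarrow> 'b::linorder"
  assumes "inj d"
  obtains p where "p permutes UNIV" "\<And>i j. i \<le> j \<Longrightarrow> d (p j) \<le> d (p i)"
proof -
  define rank where "rank i = card {j. j < i}" for i :: 'n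
  define d_rank where "d_rank i = card {j. d i < d j}" for i :: 'n
  have rank_less: "rank i < rank i'" if "i < i'" for i i'
    unfolding rank_def using that by (intro psubset_card_mono) auto
  have d_rank_less: "d_rank i' < d_rank i" if "d i < d i'" for i i'
    unfolding d_rank_def using that by (intro psubset_card_mono) auto
  have "inj rank"
    by (metis injI linorder_neqE rank_less less_irrefl)
  moreover have "rank i < CARD('n)" for i
    unfolding rank_def by (rule psubset_card_mono) auto
  ultimately have rank: "bij_betw rank UNIV {..<CARD('n)}"
    by (rule bij_betw_lessThan_CARD)
  have "inj d_rank"
    by (metis injI linorder_neqE d_rank_less less_irrefl assms injD)
  moreover have "d_rank i < CARD('n)" for i
    unfolding d_rank_def by (rule psubset_card_mono) auto
  ultimately have d_rank: "bij_betw d_rank UNIV {..<CARD('n)}"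
    by (rule bij_betw_lessThan_CARD)
  define p where "p = inv_into UNIV d_rank \<circ> rank"
  have "bij_betw p UNIV UNIV"
    unfolding p_def by (rule bij_betw_trans[OF rank bij_betw_inv_into[OF d_rank]])
  then have "p permutes UNIV"
    by (intro bij_imp_permutes) auto
  moreover have "d_rank (p i) = rank i" for i
  proof -
    have "rank i \<in> range d_rank"
      using rank d_rank by (auto simp: bij_betw_def)
    then show ?thesis
      unfolding p_def by (simp add: f_inv_into_f)
  qed
  then have "d (p j) \<le> d (p i)" if "i \<le> j" for i j
    using that rank_less d_rank_less by (metis leD le_less not_le)
  ultimately show ?thesis
    using that by blast
qed

lemma good_eigvecs_tpd_matrix:
  fixes y :: "'n::{finite,linorder} \<Rightarrow> 'n \<Rightarrow> real"
  assumes p: "p permutes UNIV"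
    and sorted: "\<And>i j. i \<le> j \<Longrightarrow> y (p j) (p j) \<le> y (p i) (p i)"
    and tpd: "\<And>a b. a \<noteq> b \<Longrightarrow> 2 * y a b < y a a + y b b"
    and diag: "inj (\<lambda>a. y a a)"
    and generic: "\<And>k s t u v.
        perm_weight (\<lambda>i j. y (p i) (p j)) k s = perm_weight (\<lambda>i j. y (p i) (p j)) k t
      \<Longrightarrow> u \<noteq> v \<Longrightarrow> perm_edge s k u v \<longleftrightarrow> perm_edge t k u v"
  shows "good_eigvecs (tpd_matrix y)"
proof -
  have inj_p: "inj p"
    using p permutes_inj by blast
  define z where "z = (\<lambda>i j. y (p i) (p j))"
  have B: "(\<lambda>i j. tpd_matrix y (p i) (p j)) = tpd_matrix z"
    by (intro ext) (simp add: tpd_matrix_def z_def inj_eq[OF inj_p])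
  have tpd_z: "2 * z a b < z a a + z b b" if "a \<noteq> b" for a b
    using tpd inj_p that by (simp add: z_def inj_eq)
  have diag_z: "inj (\<lambda>a. z a a)"
    using inj_compose[OF diag inj_p] by (simp add: z_def comp_def)
  have generic_z: "\<And>s t u v. perm_weight z k s = perm_weight z k t \<Longrightarrow> u \<noteq> v
      \<Longrightarrow> perm_edge s k u v \<longleftrightarrow> perm_edge t k u v" for k
    using generic unfolding z_def .
  have "signed (sadj (sshift (tpd_matrix z k k) (tpd_matrix z)) i k)
      \<and> sadj (sshift (tpd_matrix z k k) (tpd_matrix z)) i k \<noteq> SZero" for i k
    using tpd_z diag_z generic_z by (rule adj_column_signed_nonzero)
  moreover have "sle (tpd_matrix y (p j) (p j)) (tpd_matrix y (p i) (p i))" if "i \<le> j" for i j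
    using sorted[OF that] by (simp add: tpd_matrix_def sle_SPos)
  ultimately show ?thesis
    using p unfolding good_eigvecs_def B[symmetric] Let_def by blast
qed

section \<open>Real coordinates of K\<close>

definition utri_idx :: "'n::linorder \<Rightarrow> 'n \<Rightarrow> 'n utri" where
  "utri_idx i j = Abs_utri (min i j, max i j)"

lemma utri_rep_utri_idx: "utri_rep (utri_idx i j) = (min i j, max i j)"
  unfolding utri_idx_def
  by (rule Abs_utri_inverse) (simp, meson max.cobounded1 min.cobounded1 order_trans)

lemma utri_idx_commute: "utri_idx i j = utri_idx j i"
  unfolding utri_idx_def by (simp add: min.commute max.commute)

lemma utri_idx_eq_iff: "utri_idx i j = utri_idx u v \<longleftrightarrow> {i, j} = {u, v}"
proof -
  have "utri_idx i j = utri_idx u v \<longleftrightarrow> (min i j, max i j) = (min u v, max u v)"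
    by (metis utri_rep_inject utri_rep_utri_idx)
  also have "\<dots> \<longleftrightarrow> {i, j} = {u, v}"
    by (cases "i \<le> j"; cases "u \<le> v") (auto simp: min_def max_def doubleton_eq_iff)
  finally show ?thesis .
qed

lemma utri_idx_utri_rep: "utri_idx (fst (utri_rep p)) (snd (utri_rep p)) = p"
proof -
  obtain i j where ij: "utri_rep p = (i, j)" "i \<le> j"
    using utri_rep[of p] by auto
  then show ?thesis
    using utri_rep_inverse[of p] by (simp add: utri_idx_def min_def max_def)
qed

definition utri_matrix :: "real ^ ('n::{finite,linorder} utri) \<Rightarrow> 'n \<Rightarrow> 'n \<Rightarrow> real" where
  "utri_matrix x i j = x $ utri_idx i j"

lemma utri_matrix_commute: "utri_matrix x i j = utri_matrix x j i"
  by (simp add: utri_matrix_def utri_idx_commute)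

lemma tpd_matrix_in_TPD:
  assumes "\<And>i j. y i j = y j i" "\<And>i j. i \<noteq> j \<Longrightarrow> 2 * y i j < y i i + y j j"
  shows "tpd_matrix y \<in> TPD"
  using assms unfolding TPD_def tpd_matrix_def
  by (auto simp: signed_def is_bal_def slt_def splus_def is_pos_def)

lemma Phi_tpd_matrix:
  fixes x :: "real ^ ('n::{finite,linorder} utri)"
  shows "Phi (tpd_matrix (utri_matrix x)) = to_rmax x"
proof
  fix p :: "'n utri"
  obtain i j where "utri_rep p = (i, j)"
    by fastforce
  then show "Phi (tpd_matrix (utri_matrix x)) p = to_rmax x p"
    using utri_idx_utri_rep[of p]
    by (auto simp: Phi_def to_rmax_def tpd_matrix_def utri_matrix_def)
qed

lemma smod_signed_eq:
  assumes "signed a" "smod a = ereal r"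
  shows "a = SPos r \<or> a = SNeg r"
  using assms by (cases a) (auto simp: signed_def is_bal_def)

lemma smod_positive_eq:
  assumes "slt SZero a" "smod a = ereal r"
  shows "a = SPos r"
  using assms by (cases a) (auto simp: slt_def splus_def is_pos_def)

lemma slt_SPos: "slt (SPos a) (SPos b) \<longleftrightarrow> a < b"
  by (auto simp: slt_def splus_def is_pos_def)

lemma real_point_in_Phi_TPD_iff:
  fixes x :: "real ^ ('n::{finite,linorder} utri)"
  shows "to_rmax x \<in> Phi ` TPD \<longleftrightarrow>
    (\<forall>i j. i \<noteq> j \<longrightarrow> 2 * utri_matrix x i j < utri_matrix x i i + utri_matrix x j j)"
proof
  assume "to_rmax x \<in> Phi ` TPD"
  then obtain A :: "'n \<Rightarrow> 'n \<Rightarrow> smax" where A: "A \<in> TPD" and xA: "to_rmax x = Phi A"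
    by auto
  have smod_A: "smod (A a b) = ereal (utri_matrix x a b)" for a b
  proof -
    have "to_rmax x (utri_idx a b) = Phi A (utri_idx a b)"
      using xA by simp
    then show ?thesis
      using A unfolding to_rmax_def Phi_def utri_rep_utri_idx utri_matrix_def TPD_def
      by (cases "a \<le> b") (auto simp: min_def max_def)
  qed
  show "\<forall>i j. i \<noteq> j \<longrightarrow> 2 * utri_matrix x i j < utri_matrix x i i + utri_matrix x j j"
  proof (intro allI impI)
    fix i j :: 'n
    assume "i \<noteq> j"
    then have off: "slt (stimes (A i j) (A i j)) (stimes (A i i) (A j j))"
      and diag: "\<And>a. slt SZero (A a a)" and "signed (A i j)"
      using A unfolding TPD_def by auto
    then have "A i j = SPos (utri_matrix x i j) \<or> A i j = SNeg (utri_matrix x i j)"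
      using smod_signed_eq smod_A by blast
    moreover have "A a a = SPos (utri_matrix x a a)" for a
      using smod_positive_eq[OF diag smod_A] .
    ultimately show "2 * utri_matrix x i j < utri_matrix x i i + utri_matrix x j j"
      using off by (auto simp: slt_SPos)
  qed
next
  assume "\<forall>i j. i \<noteq> j \<longrightarrow> 2 * utri_matrix x i j < utri_matrix x i i + utri_matrix x j j"
  then have "tpd_matrix (utri_matrix x) \<in> TPD"
    by (intro tpd_matrix_in_TPD) (auto intro: utri_matrix_commute)
  then show "to_rmax x \<in> Phi ` TPD"
    using Phi_tpd_matrix by (metis image_eqI)
qed

definition tpd_normal :: "'n::{finite,linorder} \<Rightarrow> 'n \<Rightarrow> real ^ ('n utri)" where
  "tpd_normal i j = axis (utri_idx i i) 1 + axis (utri_idx j j) 1 - 2 *\<^sub>R axis (utri_idx i j) 1"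

definition tpd_normals :: "(real ^ ('n::{finite,linorder} utri)) set" where
  "tpd_normals = (\<lambda>(i, j). tpd_normal i j) ` {(i, j). i \<noteq> j}"

lemma ball_tpd_normals: "(\<forall>a\<in>tpd_normals. P a) \<longleftrightarrow> (\<forall>i j. i \<noteq> j \<longrightarrow> P (tpd_normal i j))"
  by (auto simp: tpd_normals_def)

lemma inner_tpd_normal:
  "tpd_normal i j \<bullet> x = utri_matrix x i i + utri_matrix x j j - 2 * utri_matrix x i j"
  by (simp add: tpd_normal_def utri_matrix_def inner_diff_left inner_add_left inner_axis')

lemma utri_idx_diag_ne: "u \<noteq> v \<Longrightarrow> utri_idx i i \<noteq> utri_idx u v"
  by (auto simp: utri_idx_eq_iff doubleton_eq_iff)

lemma tpd_normal_nonzero: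
  assumes "i \<noteq> j"
  shows "tpd_normal i j \<noteq> 0"
proof -
  have "utri_idx j j \<noteq> utri_idx i i" "utri_idx i j \<noteq> utri_idx i i"
    using assms by (auto simp: utri_idx_eq_iff doubleton_eq_iff)
  then have "tpd_normal i j $ utri_idx i i = 1"
    by (simp add: tpd_normal_def axis_def)
  then show ?thesis by auto
qed

lemma closure_open_dual_cone:
  fixes F :: "'a::euclidean_space set"
  assumes x0: "\<forall>a\<in>F. 0 < a \<bullet> x0"
  shows "closure {x. \<forall>a\<in>F. 0 < a \<bullet> x} = {x. \<forall>a\<in>F. 0 \<le> a \<bullet> x}"
proof
  have "closed (\<Inter>a\<in>F. {x. 0 \<le> a \<bullet> x})"
    by (intro closed_INT) (simp add: closed_halfspace_ge)
  then show "closure {x. \<forall>a\<in>F. 0 < a \<bullet> x} \<subseteq> {x. \<forall>a\<in>F. 0 \<le> a \<bullet> x}"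
    by (intro closure_minimal) (auto simp: INTER_eq)
next
  show "{x. \<forall>a\<in>F. 0 \<le> a \<bullet> x} \<subseteq> closure {x. \<forall>a\<in>F. 0 < a \<bullet> x}"
  proof
    fix y
    assume y: "y \<in> {x. \<forall>a\<in>F. 0 \<le> a \<bullet> x}"
    have seg: "open_segment x0 y \<subseteq> {x. \<forall>a\<in>F. 0 < a \<bullet> x}"
    proof
      fix z
      assume "z \<in> open_segment x0 y"
      then obtain u :: real where u: "0 < u" "u < 1" "z = (1 - u) *\<^sub>R x0 + u *\<^sub>R y"
        by (auto simp: in_segment)
      have "0 < (1 - u) * (a \<bullet> x0) + u * (a \<bullet> y)" if "a \<in> F" for a
        using x0 y u that by (intro add_pos_nonneg) auto
      then show "z \<in> {x. \<forall>a\<in>F. 0 < a \<bullet> x}"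
        using u(3) by (simp add: inner_add_right)
    qed
    show "y \<in> closure {x. \<forall>a\<in>F. 0 < a \<bullet> x}"
    proof (cases "x0 = y")
      case True
      then show ?thesis
        using x0 closure_subset[of "{x. \<forall>a\<in>F. 0 < a \<bullet> x}"] by auto
    next
      case False
      then have "y \<in> closure (open_segment x0 y)"
        by simp
      then show ?thesis
        using closure_mono[OF seg] by blast
    qed
  qed
qed

lemma Ktilde_eq:
  "(Ktilde :: (real ^ ('n::{finite,linorder} utri)) set) = {x. \<forall>a\<in>tpd_normals. 0 \<le> a \<bullet> x}"
proof -
  define x0 :: "real ^ ('n utri)" where
    "x0 = (\<chi> p. if fst (utri_rep p) = snd (utri_rep p) then 1 else 0)"
  have "utri_matrix x0 i j = (if i = j then 1 else 0)" for i j
    by (simp add: x0_def utri_matrix_def utri_rep_utri_idx min_def max_def)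
  then have "\<forall>a\<in>tpd_normals. 0 < a \<bullet> x0"
    by (simp add: ball_tpd_normals inner_tpd_normal)
  have "Ktilde = closure {x :: real ^ ('n utri). \<forall>a\<in>tpd_normals. 0 < a \<bullet> x}"
    unfolding Ktilde_def real_point_in_Phi_TPD_iff
    by (simp add: ball_tpd_normals inner_tpd_normal)
  also have "\<dots> = {x. \<forall>a\<in>tpd_normals. 0 \<le> a \<bullet> x}"
    by (rule closure_open_dual_cone) fact
  finally show ?thesis .
qed

section \<open>Sign cells of a hyperplane arrangement\<close>

definition sign_cell :: "'a::real_inner set \<Rightarrow> 'a set \<Rightarrow> 'a set" where
  "sign_cell P N = {x. (\<forall>a\<in>P. 0 \<le> a \<bullet> x) \<and> (\<forall>a\<in>N. a \<bullet> x \<le> 0)}"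

definition sign_cells :: "'a::real_inner set \<Rightarrow> 'a set \<Rightarrow> 'a set set" where
  "sign_cells H F = {sign_cell P N | P N. P \<union> N = H \<and> F \<subseteq> P}"

lemma sign_cell_eq_Inter:
  "sign_cell P N = (\<Inter>a\<in>P. {x. 0 \<le> a \<bullet> x}) \<inter> (\<Inter>a\<in>N. {x. a \<bullet> x \<le> 0})"
  unfolding sign_cell_def by auto

lemma convex_sign_cell: "convex (sign_cell P N)"
  unfolding sign_cell_eq_Inter
  by (intro convex_Int convex_INT) (auto simp: convex_halfspace_ge convex_halfspace_le)

lemma polyhedron_sign_cell:
  fixes P N :: "'a::euclidean_space set"
  assumes "finite P" "finite N"
  shows "polyhedron (sign_cell P N)"
  unfolding sign_cell_eq_Inter using assms
  by (intro polyhedron_Int polyhedron_Inter) (auto simp: polyhedron_halfspace_ge polyhedron_halfspace_le)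

lemma face_of_Int_supporting_hyperplanes:
  fixes S :: "'a::euclidean_space set"
  assumes "convex S" and supp: "\<And>a. a \<in> J \<Longrightarrow> (\<forall>x\<in>S. a \<bullet> x \<le> 0) \<or> (\<forall>x\<in>S. 0 \<le> a \<bullet> x)"
  shows "S \<inter> {x. \<forall>a\<in>J. a \<bullet> x = 0} face_of S"
proof -
  have "S \<inter> {x. \<forall>a\<in>J. a \<bullet> x = 0} = \<Inter>(insert S ((\<lambda>a. S \<inter> {x. a \<bullet> x = 0}) ` J))"
    by auto
  also have "\<dots> face_of S"
  proof (intro face_of_Inter ballI)
    fix T
    assume "T \<in> insert S ((\<lambda>a. S \<inter> {x. a \<bullet> x = 0}) ` J)"
    then consider "T = S" | a where "a \<in> J" "T = S \<inter> {x. a \<bullet> x = 0}"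
      by blast
    then show "T face_of S"
    proof cases
      case 1
      then show ?thesis
        using assms(1) by (simp add: face_of_refl)
    next
      case (2 a)
      from supp[OF 2(1)] show ?thesis
      proof
        assume "\<forall>x\<in>S. a \<bullet> x \<le> 0"
        then show ?thesis
          unfolding 2(2) using assms(1) by (intro face_of_Int_supporting_hyperplane_le) auto
      next
        assume "\<forall>x\<in>S. 0 \<le> a \<bullet> x"
        then show ?thesis
          unfolding 2(2) using assms(1) by (intro face_of_Int_supporting_hyperplane_ge) auto
      qed
    qed
  qed simp
  finally show ?thesis .
qed

lemma sign_cell_Int_face_of:
  fixes P N :: "'a::euclidean_space set"
  assumes "P \<union> N = H" "P' \<subseteq> H" "N' \<subseteq> H"
  shows "sign_cell P N \<inter> sign_cell P' N' face_of sign_cell P N"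
proof -
  let ?c = "sign_cell P N"
  let ?J = "(P' - P) \<union> (N' - N)"
  have J: "a \<in> N \<and> a \<in> P' \<or> a \<in> P \<and> a \<in> N'" if "a \<in> ?J" for a
    using that assms by blast
  have "?c \<inter> sign_cell P' N' = ?c \<inter> {x. \<forall>a\<in>?J. a \<bullet> x = 0}"
  proof (intro set_eqI iffI)
    fix x
    assume x: "x \<in> ?c \<inter> sign_cell P' N'"
    have "a \<bullet> x = 0" if "a \<in> ?J" for a
      using J[OF that] x unfolding sign_cell_def by (auto intro: order.antisym)
    then show "x \<in> ?c \<inter> {x. \<forall>a\<in>?J. a \<bullet> x = 0}"
      using x by blast
  next
    fix x
    assume x: "x \<in> ?c \<inter> {x. \<forall>a\<in>?J. a \<bullet> x = 0}"
    have "0 \<le> a \<bullet> x" if "a \<in> P'" for a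
      using x that by (cases "a \<in> P") (auto simp: sign_cell_def)
    moreover have "a \<bullet> x \<le> 0" if "a \<in> N'" for a
      using x that by (cases "a \<in> N") (auto simp: sign_cell_def)
    ultimately show "x \<in> ?c \<inter> sign_cell P' N'"
      using x by (auto simp: sign_cell_def)
  qed
  also have "\<dots> face_of ?c"
  proof (rule face_of_Int_supporting_hyperplanes[OF convex_sign_cell])
    fix a
    assume "a \<in> ?J"
    then have "a \<in> N \<or> a \<in> P"
      using J by blast
    then show "(\<forall>x\<in>?c. a \<bullet> x \<le> 0) \<or> (\<forall>x\<in>?c. 0 \<le> a \<bullet> x)"
      by (auto simp: sign_cell_def)
  qed
  finally show ?thesis .
qed

lemma polyhedral_complex_sign_cells:
  fixes H F :: "'a::euclidean_space set"
  assumes "finite H"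
  shows "polyhedral_complex (sign_cells H F)"
  unfolding polyhedral_complex_def
proof (intro conjI ballI)
  have "sign_cells H F \<subseteq> (\<lambda>(P, N). sign_cell P N) ` (Pow H \<times> Pow H)"
    unfolding sign_cells_def by auto
  then show "finite (sign_cells H F)"
    using assms by (auto intro: finite_subset)
next
  fix c
  assume "c \<in> sign_cells H F"
  then show "polyhedron c"
    using assms unfolding sign_cells_def
    by (auto intro!: polyhedron_sign_cell intro: finite_subset)
next
  fix c d
  assume "c \<in> sign_cells H F" "d \<in> sign_cells H F"
  then obtain P N P' N' where c: "c = sign_cell P N" "P \<union> N = H"
    and d: "d = sign_cell P' N'" "P' \<union> N' = H"
    unfolding sign_cells_def by blast
  have "c \<inter> d face_of c" "d \<inter> c face_of d"
    unfolding c(1) d(1) using sign_cell_Int_face_of c(2) d(2) by blast+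
  then show "c \<inter> d = {} \<or> c \<inter> d face_of c \<and> c \<inter> d face_of d"
    by (simp add: Int_commute)
qed

lemma Union_sign_cells:
  assumes "F \<subseteq> H"
  shows "\<Union>(sign_cells H F) = {x. \<forall>a\<in>F. 0 \<le> a \<bullet> x}"
proof
  show "\<Union>(sign_cells H F) \<subseteq> {x. \<forall>a\<in>F. 0 \<le> a \<bullet> x}"
    unfolding sign_cells_def sign_cell_def by blast
next
  show "{x. \<forall>a\<in>F. 0 \<le> a \<bullet> x} \<subseteq> \<Union>(sign_cells H F)"
  proof
    fix x
    assume "x \<in> {x. \<forall>a\<in>F. 0 \<le> a \<bullet> x}"
    then have "F \<subseteq> {a\<in>H. 0 \<le> a \<bullet> x}"
      using assms by auto
    moreover have "{a\<in>H. 0 \<le> a \<bullet> x} \<union> {a\<in>H. a \<bullet> x \<le> 0} = H"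
      by auto
    ultimately have "sign_cell {a\<in>H. 0 \<le> a \<bullet> x} {a\<in>H. a \<bullet> x \<le> 0} \<in> sign_cells H F"
      unfolding sign_cells_def by blast
    moreover have "x \<in> sign_cell {a\<in>H. 0 \<le> a \<bullet> x} {a\<in>H. a \<bullet> x \<le> 0}"
      unfolding sign_cell_def by auto
    ultimately show "x \<in> \<Union>(sign_cells H F)"
      by blast
  qed
qed

lemma interior_sign_cells_avoids_hyperplanes:
  fixes H F :: "'a::euclidean_space set"
  assumes "0 \<notin> H" "c \<in> sign_cells H F" "x \<in> interior c" "a \<in> H"
  shows "a \<bullet> x \<noteq> 0"
proof -
  obtain P N where c: "c = sign_cell P N" "P \<union> N = H"
    using assms(2) unfolding sign_cells_def by blast
  have "a \<noteq> 0"
    using assms by auto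
  consider "a \<in> P" | "a \<in> N"
    using assms(4) c(2) by blast
  then show ?thesis
  proof cases
    case 1
    then have "interior c \<subseteq> interior {y. 0 \<le> a \<bullet> y}"
      unfolding c(1) sign_cell_def by (intro interior_mono) auto
    then show ?thesis
      using assms(3) \<open>a \<noteq> 0\<close> by auto
  next
    case 2
    then have "interior c \<subseteq> interior {y. a \<bullet> y \<le> 0}"
      unfolding c(1) sign_cell_def by (intro interior_mono) auto
    then show ?thesis
      using assms(3) \<open>a \<noteq> 0\<close> by auto
  qed
qed

section \<open>Generic points\<close>

text \<open>g l tells which of y k k and y l l realizes the maximum in shift_weight.\<close>

definition weight_vec ::
    "('n::{finite,linorder} \<Rightarrow> 'n) \<Rightarrow> ('n \<Rightarrow> bool) \<Rightarrow> 'n \<Rightarrow> ('n \<Rightarrow> 'n) \<Rightarrow> real ^ ('n utri)" where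
  "weight_vec q g k s = (\<Sum>l\<in>UNIV-{k}. axis
     (if s l \<noteq> l then utri_idx (q l) (q (s l)) else if g l then utri_idx (q k) (q k) else utri_idx (q l) (q l)) 1)"

lemma inner_weight_vec:
  fixes x :: "real ^ ('n::{finite,linorder} utri)" and q :: "'n \<Rightarrow> 'n"
  defines "y \<equiv> \<lambda>i j. utri_matrix x (q i) (q j)"
  shows "x \<bullet> weight_vec q (\<lambda>l. y l l < y k k) k s = perm_weight y k s"
  unfolding weight_vec_def perm_weight_def shift_weight_def inner_sum_right y_def
  by (intro sum.cong) (auto simp: inner_axis utri_matrix_def)

lemma weight_vec_component_pos_iff:
  assumes q: "inj q" and uv: "u \<noteq> v"
  shows "0 < weight_vec q g k s $ utri_idx (q u) (q v) \<longleftrightarrow> perm_edge s k u v"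
proof -
  let ?idx = "\<lambda>l. if s l \<noteq> l then utri_idx (q l) (q (s l))
    else if g l then utri_idx (q k) (q k) else utri_idx (q l) (q l)"
  have hit: "?idx l = utri_idx (q u) (q v) \<longleftrightarrow> s l \<noteq> l \<and> {l, s l} = {u, v}" for l
  proof -
    have "q u \<noteq> q v"
      using q uv by (auto dest: injD)
    then have "utri_idx (q m) (q m) \<noteq> utri_idx (q u) (q v)" for m
      by (rule utri_idx_diag_ne)
    moreover have "utri_idx (q l) (q (s l)) = utri_idx (q u) (q v) \<longleftrightarrow> {l, s l} = {u, v}"
      unfolding utri_idx_eq_iff using inj_image_eq_iff[OF q, of "{l, s l}" "{u, v}"] by simp
    ultimately show ?thesis
      by auto
  qed
  have "weight_vec q g k s $ utri_idx (q u) (q v)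
      = (\<Sum>l\<in>UNIV-{k}. if ?idx l = utri_idx (q u) (q v) then 1 else 0)"
    unfolding weight_vec_def sum_component by (intro sum.cong) (auto simp: axis_def)
  also have "\<dots> = real (card {l\<in>UNIV-{k}. ?idx l = utri_idx (q u) (q v)})"
    using sum.inter_filter[of "UNIV-{k}" "\<lambda>_. 1::real" "\<lambda>l. ?idx l = utri_idx (q u) (q v)"]
    by simp
  finally show ?thesis
    unfolding perm_edge_def hit by (auto simp: card_gt_0_iff)
qed

definition walls :: "(real ^ ('n::{finite,linorder} utri)) set" where
  "walls = (tpd_normals \<union> range (\<lambda>(i, j). axis (utri_idx i i) 1 - axis (utri_idx j j) 1)
     \<union> range (\<lambda>(q, g, k, s, t). weight_vec q g k s - weight_vec q g k t)) - {0}"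

lemma finite_walls: "finite walls"
  by (simp add: walls_def tpd_normals_def)

lemma tpd_normals_subset_walls: "tpd_normals \<subseteq> walls"
  using tpd_normal_nonzero by (auto simp: walls_def tpd_normals_def)

lemma strict_tpd_off_walls:
  fixes x :: "real ^ ('n::{finite,linorder} utri)"
  assumes "x \<in> Ktilde" "\<And>a. a \<in> walls \<Longrightarrow> a \<bullet> x \<noteq> 0" "i \<noteq> j"
  shows "2 * utri_matrix x i j < utri_matrix x i i + utri_matrix x j j"
proof -
  have "0 \<le> tpd_normal i j \<bullet> x" "tpd_normal i j \<bullet> x \<noteq> 0"
    using assms tpd_normals_subset_walls by (auto simp: Ktilde_eq ball_tpd_normals tpd_normals_def)
  then show ?thesis
    by (simp add: inner_tpd_normal)
qed

lemma inj_diag_off_walls: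
  fixes x :: "real ^ ('n::{finite,linorder} utri)"
  assumes off: "\<And>a. a \<in> walls \<Longrightarrow> a \<bullet> x \<noteq> 0"
  shows "inj (\<lambda>i. utri_matrix x i i)"
proof (rule injI)
  fix i j
  assume "utri_matrix x i i = utri_matrix x j j"
  then have "(axis (utri_idx i i) 1 - axis (utri_idx j j) 1) \<bullet> x = 0"
    by (simp add: inner_diff_left inner_axis' utri_matrix_def)
  then have "axis (utri_idx i i) 1 - axis (utri_idx j j) (1::real) = 0"
    using off unfolding walls_def by blast
  then show "i = j"
    by (simp add: axis_eq_axis utri_idx_eq_iff)
qed

lemma perm_edges_eq_off_walls:
  fixes x :: "real ^ ('n::{finite,linorder} utri)" and p :: "'n \<Rightarrow> 'n"
  defines "y \<equiv> \<lambda>i j. utri_matrix x (p i) (p j)"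
  assumes off: "\<And>a. a \<in> walls \<Longrightarrow> a \<bullet> x \<noteq> 0" and "inj p"
    and "perm_weight y k s = perm_weight y k t" "u \<noteq> v"
  shows "perm_edge s k u v \<longleftrightarrow> perm_edge t k u v"
proof -
  define g where "g l \<longleftrightarrow> y l l < y k k" for l
  have "x \<bullet> (weight_vec p g k s - weight_vec p g k t) = 0"
    using assms(4) inner_weight_vec[of x p k] unfolding g_def y_def
    by (simp add: inner_diff_right)
  then have "(weight_vec p g k s - weight_vec p g k t) \<bullet> x = 0"
    by (simp add: inner_commute)
  moreover have "weight_vec p g k s - weight_vec p g k t
      \<in> range (\<lambda>(q, g, k, s, t). weight_vec q g k s - weight_vec q g k t)"
    by (rule range_eqI[where x="(p, g, k, s, t)"]) simp
  ultimately have "weight_vec p g k s = weight_vec p g k t"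
    using off unfolding walls_def by fastforce
  then show ?thesis
    using weight_vec_component_pos_iff[OF assms(3,5)] by metis
qed

lemma good_matrix_at_generic_point:
  fixes x :: "real ^ ('n::{finite,linorder} utri)"
  assumes K: "x \<in> Ktilde" and off: "\<And>a. a \<in> walls \<Longrightarrow> a \<bullet> x \<noteq> 0"
  shows "\<exists>A\<in>TPD. simple_eigenvalues A \<and> good_eigvecs A \<and> Phi A = to_rmax x"
proof -
  define y where "y = utri_matrix x"
  have tpd: "\<And>i j. i \<noteq> j \<Longrightarrow> 2 * y i j < y i i + y j j"
    unfolding y_def using K off by (rule strict_tpd_off_walls)
  have diag: "inj (\<lambda>i. y i i)"
    unfolding y_def using off by (rule inj_diag_off_walls)
  obtain p where p: "p permutes UNIV" and sorted: "\<And>i j. i \<le> j \<Longrightarrow> y (p j) (p j) \<le> y (p i) (p i)"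
    using exists_antitone_perm[OF diag] by blast
  have "tpd_matrix y \<in> TPD"
    using tpd by (intro tpd_matrix_in_TPD) (simp_all add: y_def utri_matrix_commute)
  moreover have "simple_eigenvalues (tpd_matrix y)"
    using diag by (auto simp: simple_eigenvalues_def tpd_matrix_def inj_def)
  moreover have "good_eigvecs (tpd_matrix y)"
    using p sorted tpd diag
  proof (rule good_eigvecs_tpd_matrix)
    show "perm_edge s k u v \<longleftrightarrow> perm_edge t k u v"
      if "perm_weight (\<lambda>i j. y (p i) (p j)) k s = perm_weight (\<lambda>i j. y (p i) (p j)) k t" "u \<noteq> v"
      for k s t u v
      using perm_edges_eq_off_walls[OF off permutes_inj[OF p]] that unfolding y_def by blast
  qed
  moreover have "Phi (tpd_matrix y) = to_rmax x"
    unfolding y_def by (rule Phi_tpd_matrix)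
  ultimately show ?thesis
    by blast
qed

theorem corollary5p24:
  shows "\<exists>\<C> :: (real ^ ('n::{finite,linorder} utri)) set set.
    polyhedral_complex \<C> \<and> \<Union>\<C> = (Ktilde :: (real ^ ('n utri)) set) \<and>
    (\<forall>c\<in>\<C>. (\<forall>d\<in>\<C>. aff_dim d \<le> aff_dim c) \<longrightarrow>
       (\<forall>x\<in>interior c. \<exists>A \<in> (TPD :: ('n \<Rightarrow> 'n \<Rightarrow> smax) set).
          simple_eigenvalues A \<and> good_eigvecs A \<and> Phi A = to_rmax x))"
proof -
  txt \<open>All cells, not only the maximal ones, have the required property.\<close>
  let ?C = "sign_cells walls (tpd_normals :: (real ^ ('n utri)) set)"
  have "polyhedral_complex ?C"
    using finite_walls by (rule polyhedral_complex_sign_cells)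
  moreover have "\<Union>?C = Ktilde"
    by (simp add: Union_sign_cells[OF tpd_normals_subset_walls] Ktilde_eq)
  moreover have "\<exists>A\<in>TPD. simple_eigenvalues A \<and> good_eigvecs A \<and> Phi A = to_rmax x"
    if "c \<in> ?C" "x \<in> interior c" for c x
  proof (rule good_matrix_at_generic_point)
    show "x \<in> Ktilde"
      using that interior_subset \<open>\<Union>?C = Ktilde\<close> by blast
    show "a \<bullet> x \<noteq> 0" if "a \<in> walls" for a
      using interior_sign_cells_avoids_hyperplanes[of walls c tpd_normals x a] \<open>c \<in> ?C\<close> \<open>x \<in> interior c\<close> that
      by (auto simp: walls_def)
  qed
  ultimately show ?thesis
    by blast
qed

end
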